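(* Let $f:\mathbb{R}^n\to\mathbb{R}$ be differentiable, $\mu$-strongly convex, with $L$-Lipschitz gradient $\nabla f$, and let $x^*$ be its unique minimizer. Let $\mathcal{E}^t$ denote the event $\|\nabla f(x^t)\|_\infty\le\eta$. If $x\in\mathbb{R}^n$ satisfies $\|x-x^*\|_2>\frac{L\alpha\sqrt{n}}{2\mu}$, then the iterate $x^{t+1}$ of Markov gradient descent satisfies $$\mathbb{E}\left[\|x^{t+1}-x^*\|_2^2\,\middle|\,x^t=x,\mathcal{E}^t\right]<\|x-x^*\|_2^2 .$$
   Context: A differentiable $f$ is $\mu$-strongly convex if $\langle\nabla f(x)-\nabla f(y),x-y\rangle\ge\mu\|x-y\|_2^2$ for all $x,y$. Markov gradient descent (MGD) with lattice resolution $\alpha>0$ and normalizer $\eta>0$: start at $x^0\in\alpha\mathbb{Z}^n$; at step $t$, for each coordinate $i$, conditionally on $x^t$, $\Delta^t_i\in\{0,1\}$ is Bernoulli with $\mathbb{P}[\Delta^t_i=1\mid x^t]=\min(|\partial_i f(x^t)|/\eta,1)$, and $x^{t+1}_i=x^t_i-\alpha\,\mathrm{sgn}(\partial_i f(x^t))\Delta^t_i$. *)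

theory Defs
  imports "HOL-Analysis.Analysis" "HOL-Probability.Probability"
begin

text \<open>The random increments Delta_i are independent Bernoulli
  variables with success probability min(|partial_i f(x)|/eta, 1); the result is the
  (conditional) law of the next iterate.\<close>

definition mgd_step ::
  "(real^'n \<Rightarrow> real^'n) \<Rightarrow> real \<Rightarrow> real \<Rightarrow> real^'n \<Rightarrow> (real^'n) pmf" where
  "mgd_step grad \<alpha> \<eta> x =
     map_pmf (\<lambda>\<Delta>. \<chi> i. x$i - \<alpha> * sgn (grad x $ i) * (if \<Delta> i then 1 else 0))
       (Pi_pmf UNIV False (\<lambda>i. bernoulli_pmf (min (\<bar>grad x $ i\<bar> / \<eta>) 1)))"

end

theory Submission
  imports Defs
begin

text \<open>Each coordinate moves independently, so the expected squared distance to any point z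
  splits coordinatewise. When no step probability is truncated, coordinate i contributes the
  exact decrease (alpha/eta)(2 g_i d_i - alpha |g_i|), where g is the gradient and d = x - z;
  in total the expected squared distance drops by (alpha/eta)(2 <g, d> - alpha |g|_1).
  With z the minimizer, strong convexity gives <g, d> >= mu |d|^2, while the Lipschitz bound
  and Cauchy-Schwarz give alpha |g|_1 <= alpha sqrt(n) L |d|, so far from the minimizer the
  decrease is positive.\<close>

lemma sum_abs_le_sqrt_card_norm:
  fixes g :: "real^'n"
  shows "(\<Sum>i\<in>UNIV. \<bar>g$i\<bar>) \<le> sqrt (real CARD('n)) * norm g"
proof -
  have "L2_set (\<lambda>i. \<bar>g$i\<bar>) UNIV = L2_set (\<lambda>i. g$i) UNIV"
    by (simp add: L2_set_def)
  then show ?thesis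
    using L2_set_mult_ineq[of "\<lambda>i. g$i" "\<lambda>_. 1" UNIV]
    by (simp add: norm_vec_def L2_set_constant mult.commute)
qed

lemma gderiv_eq_0_at_global_min:
  assumes "GDERIV f x :> g" and "\<And>y. f x \<le> f y"
  shows "g = 0"
proof -
  have "(f has_derivative (\<lambda>h. inner h g)) (at x)"
    using assms(1) by (simp add: gderiv_def)
  then have "(\<lambda>h. inner h g) = (\<lambda>h. 0)"
    by (rule has_derivative_local_min) (simp add: assms(2))
  then have "inner g g = 0" by metis
  then show ?thesis by simp
qed

lemma expectation_Pi_pmf_sum_components:
  fixes p :: "'i::finite \<Rightarrow> 'a::finite pmf" and h :: "'i \<Rightarrow> 'a \<Rightarrow> real"
  shows "measure_pmf.expectation (Pi_pmf UNIV dflt p) (\<lambda>\<omega>. \<Sum>i\<in>UNIV. h i (\<omega> i))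
           = (\<Sum>i\<in>UNIV. measure_pmf.expectation (p i) (h i))"
proof -
  have "measure_pmf.expectation (Pi_pmf UNIV dflt p) (\<lambda>\<omega>. \<Sum>i\<in>UNIV. h i (\<omega> i))
      = (\<Sum>i\<in>UNIV. measure_pmf.expectation (Pi_pmf UNIV dflt p) (\<lambda>\<omega>. h i (\<omega> i)))"
    by (rule Bochner_Integration.integral_sum) (simp add: integrable_measure_pmf_finite)
  also have "\<dots> = (\<Sum>i\<in>UNIV. measure_pmf.expectation (map_pmf (\<lambda>\<omega>. \<omega> i) (Pi_pmf UNIV dflt p)) (h i))"
    by simp
  also have "\<dots> = (\<Sum>i\<in>UNIV. measure_pmf.expectation (p i) (h i))"
    by (simp add: Pi_pmf_component)
  finally show ?thesis .
qed

lemma norm_vec_power2: "(norm (x :: real^'n))\<^sup>2 = (\<Sum>i\<in>UNIV. (x$i)\<^sup>2)"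
  unfolding power2_norm_eq_inner inner_vec_def by (simp add: power2_eq_square)

lemma expectation_mgd_step_sq_dist:
  fixes grad :: "real^'n \<Rightarrow> real^'n" and x z :: "real^'n"
  assumes eta_pos: "\<eta> > 0" and event: "infnorm (grad x) \<le> \<eta>"
  shows "measure_pmf.expectation (mgd_step grad \<alpha> \<eta> x) (\<lambda>y. (norm (y - z))\<^sup>2)
           = (norm (x - z))\<^sup>2
             - (\<alpha> / \<eta>) * (2 * inner (grad x) (x - z) - \<alpha> * (\<Sum>i\<in>UNIV. \<bar>grad x $ i\<bar>))"
proof -
  define g where "g = grad x"
  define d where "d = x - z"
  define h where "h i b = (d$i - \<alpha> * sgn (g$i) * (if b then 1 else 0))\<^sup>2" for i b
  have prob_eq: "min (\<bar>g$i\<bar> / \<eta>) 1 = \<bar>g$i\<bar> / \<eta>" for i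
    using event component_le_infnorm_cart[of g i] eta_pos by (simp add: g_def)
  have coordinate:
    "measure_pmf.expectation (bernoulli_pmf (\<bar>g$i\<bar> / \<eta>)) (h i)
       = (d$i)\<^sup>2 - (\<alpha> / \<eta>) * (2 * g$i * d$i - \<alpha> * \<bar>g$i\<bar>)" for i
  proof -
    have "\<bar>g$i\<bar> / \<eta> \<le> 1" using prob_eq[of i] by linarith
    then show ?thesis
      using eta_pos by (simp add: h_def power2_eq_square sgn_if abs_if field_simps)
  qed
  have "measure_pmf.expectation (mgd_step grad \<alpha> \<eta> x) (\<lambda>y. (norm (y - z))\<^sup>2)
      = measure_pmf.expectation (Pi_pmf UNIV False (\<lambda>i. bernoulli_pmf (\<bar>g$i\<bar> / \<eta>)))
          (\<lambda>\<Delta>. \<Sum>i\<in>UNIV. h i (\<Delta> i))"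
    unfolding mgd_step_def integral_map_pmf g_def[symmetric] prob_eq norm_vec_power2
    by (simp add: h_def d_def algebra_simps)
  also have "\<dots> = (\<Sum>i\<in>UNIV. (d$i)\<^sup>2 - (\<alpha> / \<eta>) * (2 * g$i * d$i - \<alpha> * \<bar>g$i\<bar>))"
    by (simp add: expectation_Pi_pmf_sum_components coordinate)
  also have "\<dots> = (norm d)\<^sup>2 - (\<alpha> / \<eta>) * (2 * inner g d - \<alpha> * (\<Sum>i\<in>UNIV. \<bar>g$i\<bar>))"
    unfolding norm_vec_power2 inner_vec_def
    by (simp add: sum_subtractf sum.distrib sum_distrib_left algebra_simps)
  finally show ?thesis by (simp add: g_def d_def)
qed

lemma strongly_convex_far_l1_grad_less:
  fixes grad :: "real^'n \<Rightarrow> real^'n"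
  assumes mu_pos: "\<mu> > 0" and alpha_pos: "\<alpha> > 0"
    and strong_convex: "\<mu> * (norm (x - xs))\<^sup>2 \<le> inner (grad x - grad xs) (x - xs)"
    and lipschitz: "L-lipschitz_on UNIV grad"
    and critical: "grad xs = 0"
    and far: "norm (x - xs) > L * \<alpha> * sqrt (real CARD('n)) / (2 * \<mu>)"
  shows "\<alpha> * (\<Sum>i\<in>UNIV. \<bar>grad x $ i\<bar>) < 2 * inner (grad x) (x - xs)"
proof -
  define r where "r = norm (x - xs)"
  have "L \<ge> 0" using lipschitz by (rule lipschitz_on_nonneg)
  then have r_pos: "r > 0"
    using far mu_pos alpha_pos unfolding r_def
    by (smt (verit) divide_nonneg_pos mult_nonneg_nonneg real_sqrt_ge_zero of_nat_0_le_iff)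
  have "norm (grad x) \<le> L * r"
    using lipschitz_onD[OF lipschitz, of x xs] critical by (simp add: r_def dist_norm)
  then have "\<alpha> * (\<Sum>i\<in>UNIV. \<bar>grad x $ i\<bar>) \<le> \<alpha> * (sqrt (real CARD('n)) * (L * r))"
    using sum_abs_le_sqrt_card_norm[of "grad x"] alpha_pos
    by (smt (verit) mult_left_mono real_sqrt_ge_zero of_nat_0_le_iff)
  also have "\<dots> = (L * \<alpha> * sqrt (real CARD('n)) / (2 * \<mu>)) * (2 * \<mu> * r)"
    using mu_pos by (simp add: field_simps)
  also have "\<dots> < r * (2 * \<mu> * r)"
    using far mu_pos r_pos unfolding r_def[symmetric] by (intro mult_strict_right_mono) simp_all
  also have "\<dots> = 2 * (\<mu> * r\<^sup>2)" by (simp add: power2_eq_square)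
  also have "\<dots> \<le> 2 * inner (grad x) (x - xs)"
    using strong_convex critical by (simp add: r_def)
  finally show ?thesis .
qed

theorem corollary6p5:
  fixes f :: "real^'n \<Rightarrow> real" and grad :: "real^'n \<Rightarrow> real^'n"
    and \<mu> L \<alpha> \<eta> :: real and xs x :: "real^'n"
  assumes grad: "\<And>y. GDERIV f y :> grad y"
    and mu_pos: "\<mu> > 0"
    and strong_convex: "\<And>y z. inner (grad y - grad z) (y - z) \<ge> \<mu> * (norm (y - z))\<^sup>2"
    and lipschitz: "L-lipschitz_on UNIV grad"
    and minimizer: "\<And>y. f xs \<le> f y"
    and alpha_pos: "\<alpha> > 0" and eta_pos: "\<eta> > 0"
    and event: "infnorm (grad x) \<le> \<eta>"
    and far: "norm (x - xs) > L * \<alpha> * sqrt (real CARD('n)) / (2 * \<mu>)"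
  shows "measure_pmf.expectation (mgd_step grad \<alpha> \<eta> x) (\<lambda>y. (norm (y - xs))\<^sup>2)
           < (norm (x - xs))\<^sup>2"
proof -
  have "grad xs = 0"
    using grad minimizer by (rule gderiv_eq_0_at_global_min)
  then have "0 < 2 * inner (grad x) (x - xs) - \<alpha> * (\<Sum>i\<in>UNIV. \<bar>grad x $ i\<bar>)"
    using strongly_convex_far_l1_grad_less[OF mu_pos alpha_pos strong_convex lipschitz _ far]
    by simp
  then have "0 < (\<alpha> / \<eta>) * (2 * inner (grad x) (x - xs) - \<alpha> * (\<Sum>i\<in>UNIV. \<bar>grad x $ i\<bar>))"
    using alpha_pos eta_pos by simp
  then show ?thesis
    using expectation_mgd_step_sq_dist[where grad = grad and \<alpha> = \<alpha> and x = x and z = xs, OF eta_pos event] by linarith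
qed

end
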